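(* Consider the symmetric two-user channel $a=c>0$, $b=d>0$, with $P_{\max}>0$. If $$b\ge\frac{\sqrt{1+aP_{\max}}}{P_{\max}},$$ then operating via TDM is optimal: the convex hull of the power-control rate region equals the triangle with vertices $(0,0)$, $(0,\log_2(1+aP_{\max}))$ and $(\log_2(1+aP_{\max}),0)$.
   Context: This is the two-user interference channel with interference treated as noise. The rates are $R_1(P_1,P_2)=\log_2\!\left(1+\frac{aP_1}{1+bP_2}\right)$ and $R_2(P_1,P_2)=\log_2\!\left(1+\frac{cP_2}{1+dP_1}\right)$, with $P_1,P_2\in[0,P_{\max}]$. The gains are normalized by the noise variance: $a,c$ are direct gains and $b,d$ are interference gains. The power-control rate region is $\{(r_1,r_2)\in\mathbb R^2_{\ge0}: \exists (P_1,P_2)\in[0,P_{\max}]^2,\ r_1\le R_1(P_1,P_2),\ r_2\le R_2(P_1,P_2)\}$. *)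

theory Defs
  imports "HOL-Analysis.Analysis"
begin

text \<open>Rates of the two-user interference channel, interference treated as noise.\<close>
definition R1 :: "real \<Rightarrow> real \<Rightarrow> real \<Rightarrow> real \<Rightarrow> real" where
  "R1 a b P1 P2 = log 2 (1 + a * P1 / (1 + b * P2))"

definition R2 :: "real \<Rightarrow> real \<Rightarrow> real \<Rightarrow> real \<Rightarrow> real" where
  "R2 c d P1 P2 = log 2 (1 + c * P2 / (1 + d * P1))"

definition rate_region :: "real \<Rightarrow> real \<Rightarrow> real \<Rightarrow> real \<Rightarrow> real \<Rightarrow> (real \<times> real) set" where
  "rate_region a b c d Pmax =
     {(r1, r2). r1 \<ge> 0 \<and> r2 \<ge> 0 \<and>
        (\<exists>P1 P2. 0 \<le> P1 \<and> P1 \<le> Pmax \<and> 0 \<le> P2 \<and> P2 \<le> Pmax \<and>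
                 r1 \<le> R1 a b P1 P2 \<and> r2 \<le> R2 c d P1 P2)}"

end

theory Submission
  imports Defs
begin

(*
  Write L = log2 (1 + a Pmax) for the single-user rate at full power.  The proof
  sandwiches the rate region between the corner points of the TDM triangle and
  the triangle itself:
   (1) the corners (0,0), (0,L), (L,0) are achievable (one user silent, the
       other at full power), for arbitrary gains;
   (2) under b^2 Pmax^2 >= 1 + a Pmax (equivalent to the hypothesis
       b >= sqrt (1 + a Pmax) / Pmax) every power pair satisfies R1 + R2 <= L;
       after clearing denominators this is a polynomial inequality that is
       shown by exhibiting a sum of manifestly nonnegative terms;
   (3) the set {r1, r2 >= 0, r1 + r2 <= L} is the convex hull of the corners.
  A set lying between a finite set V and its convex hull has the same convex
  hull as V, which yields the theorem.
*)

lemma threshold_squared: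
  fixes a b P :: real
  assumes "a \<ge> 0" and "P > 0" and "b \<ge> sqrt (1 + a * P) / P"
  shows "b^2 * P^2 \<ge> 1 + a * P"
proof -
  have nonneg: "0 \<le> 1 + a * P" using assms by simp
  have "sqrt (1 + a * P) \<le> b * P" using assms by (simp add: field_simps)
  hence "(sqrt (1 + a * P))^2 \<le> (b * P)^2" using nonneg by (intro power_mono) auto
  thus ?thesis using nonneg by (simp add: power_mult_distrib)
qed

text \<open>Core polynomial inequality: the product of the two SINR factors
  (1 + a x/(1 + b y)) (1 + a y/(1 + b x)), with denominators cleared, is at most
  1 + a P.  The difference is a h, and P^2 h is a sum of three terms that are
  nonnegative on the box [0,P]^2 precisely thanks to the threshold condition.\<close>
lemma sinr_product_polynomial_bound:
  fixes a b P x y :: real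
  assumes a: "a \<ge> 0" and b: "b \<ge> 0" and P: "P > 0"
    and threshold: "b^2 * P^2 \<ge> 1 + a * P"
    and x: "0 \<le> x" "x \<le> P" and y: "0 \<le> y" "y \<le> P"
  shows "(1 + b*y + a*x) * (1 + b*x + a*y) \<le> (1 + a*P) * ((1 + b*y) * (1 + b*x))"
proof -
  define h where "h = P + P*b*(x+y) + P*b^2*x*y - (x+y) - b*(x^2+y^2) - a*x*y"
  have gap: "(1 + a*P) * ((1 + b*y) * (1 + b*x)) - (1 + b*y + a*x) * (1 + b*x + a*y) = a * h"
    unfolding h_def by (simp add: algebra_simps power2_eq_square)
  have decomposition:
    "P^2 * h = (P-x)*(P-y)*P + x*y*(P*(P^2*b^2 - 1 - a*P)) + P^2*b*(x*(P-x) + y*(P-y))"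
    unfolding h_def by (simp add: algebra_simps power2_eq_square power3_eq_cube)
  have "(P-x)*(P-y)*P \<ge> 0" using x y P by simp
  moreover have "x*y*(P*(P^2*b^2 - 1 - a*P)) \<ge> 0" using x y P threshold
    by (intro mult_nonneg_nonneg) (auto simp: algebra_simps)
  moreover have "P^2*b*(x*(P-x) + y*(P-y)) \<ge> 0" using x y b by simp
  ultimately have "P^2 * h \<ge> 0" using decomposition by linarith
  hence "h \<ge> 0" using P by (simp add: zero_le_mult_iff)
  thus ?thesis using gap a by (simp add: algebra_simps)
qed

lemma sum_rate_le_single_user_rate:
  fixes a b P x y :: real
  assumes a: "a \<ge> 0" and b: "b \<ge> 0" and P: "P > 0"
    and threshold: "b^2 * P^2 \<ge> 1 + a * P"
    and x: "0 \<le> x" "x \<le> P" and y: "0 \<le> y" "y \<le> P"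
  shows "R1 a b x y + R2 a b x y \<le> log 2 (1 + a * P)"
proof -
  have den: "1 + b*y > 0" "1 + b*x > 0" using b x y by (auto intro: add_pos_nonneg)
  have num: "1 + b*y + a*x > 0" "1 + b*x + a*y > 0" using a x y den
    by (auto intro: add_pos_nonneg)
  have sinr1: "1 + a*x/(1+b*y) = (1 + b*y + a*x)/(1+b*y)"
   and sinr2: "1 + a*y/(1+b*x) = (1 + b*x + a*y)/(1+b*x)" using den by (simp_all add: field_simps)
  have "R1 a b x y + R2 a b x y
          = log 2 (((1 + b*y + a*x) * (1 + b*x + a*y)) / ((1 + b*y) * (1 + b*x)))"
    unfolding R1_def R2_def sinr1 sinr2 using den num by (subst log_mult_pos[symmetric]) auto
  also have "\<dots> \<le> log 2 (1 + a * P)"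
  proof (rule log_mono)
    have "(1 + b*y + a*x) * (1 + b*x + a*y) \<le> (1 + a*P) * ((1 + b*y) * (1 + b*x))"
      using sinr_product_polynomial_bound[OF a b P threshold x y] .
    thus "((1 + b*y + a*x) * (1 + b*x + a*y)) / ((1 + b*y) * (1 + b*x)) \<le> 1 + a*P"
      using den by (simp add: pos_divide_le_eq)
  qed (use den num in auto)
  finally show ?thesis .
qed

lemma rates_in_rate_region:
  fixes a b c d Pmax P1 P2 :: real
  assumes "0 \<le> P1" "P1 \<le> Pmax" "0 \<le> P2" "P2 \<le> Pmax"
    and "R1 a b P1 P2 \<ge> 0" "R2 c d P1 P2 \<ge> 0"
  shows "(R1 a b P1 P2, R2 c d P1 P2) \<in> rate_region a b c d Pmax"
  unfolding rate_region_def using assms by blast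

lemma tdm_corners_in_rate_region:
  fixes a b c d Pmax :: real
  assumes "a \<ge> 0" and "c \<ge> 0" and "Pmax \<ge> 0"
  shows "{(0, 0), (0, log 2 (1 + c * Pmax)), (log 2 (1 + a * Pmax), 0)}
           \<subseteq> rate_region a b c d Pmax"
proof -
  have "log 2 (1 + c * Pmax) \<ge> 0" "log 2 (1 + a * Pmax) \<ge> 0"
    using assms by (simp_all add: zero_le_log_cancel_iff add_pos_nonneg)
  moreover have rates: "R1 a b 0 0 = 0" "R2 c d 0 0 = 0" "R1 a b 0 Pmax = 0" "R2 c d Pmax 0 = 0"
    "R2 c d 0 Pmax = log 2 (1 + c * Pmax)" "R1 a b Pmax 0 = log 2 (1 + a * Pmax)"
    unfolding R1_def R2_def by simp_all
  ultimately have "(R1 a b 0 0, R2 c d 0 0) \<in> rate_region a b c d Pmax"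
    "(R1 a b 0 Pmax, R2 c d 0 Pmax) \<in> rate_region a b c d Pmax"
    "(R1 a b Pmax 0, R2 c d Pmax 0) \<in> rate_region a b c d Pmax"
    using assms(3) by (metis order_refl rates_in_rate_region)+
  thus ?thesis unfolding rates by simp
qed

lemma triangle_subset_convex_hull:
  fixes L :: real
  assumes "L > 0"
  shows "{(r1, r2). r1 \<ge> 0 \<and> r2 \<ge> 0 \<and> r1 + r2 \<le> L} \<subseteq> convex hull {(0, 0), (0, L), (L, 0)}"
proof clarify
  fix r1 r2 :: real assume r: "r1 \<ge> 0" "r2 \<ge> 0" "r1 + r2 \<le> L"
  let ?u = "1 - (r1 + r2)/L" and ?v = "r2/L" and ?w = "r1/L"
  have "(r1, r2) = ?u *\<^sub>R (0,0) + ?v *\<^sub>R (0, L) + ?w *\<^sub>R (L, 0)"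
    using assms by simp
  moreover have "0 \<le> ?u" "0 \<le> ?v" "0 \<le> ?w" "?u + ?v + ?w = 1"
    using r assms by (auto simp: field_simps)
  ultimately show "(r1, r2) \<in> convex hull {(0, 0), (0, L), (L, 0)}"
    unfolding convex_hull_3 by blast
qed

lemma convex_hull_eq_if_between:
  fixes S V :: "'a::real_vector set"
  assumes "V \<subseteq> S" and "S \<subseteq> convex hull V"
  shows "convex hull S = convex hull V"
  using assms by (metis convex_convex_hull hull_minimal hull_mono subset_antisym)

theorem corollary3:
  fixes a b Pmax :: real
  assumes "a > 0" and "b > 0" and "Pmax > 0"
    and "b \<ge> sqrt (1 + a * Pmax) / Pmax"
  shows "convex hull (rate_region a b a b Pmax) =
         convex hull {(0, 0), (0, log 2 (1 + a * Pmax)), (log 2 (1 + a * Pmax), 0)}"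
proof (rule convex_hull_eq_if_between)
  let ?L = "log 2 (1 + a * Pmax)"
  have threshold: "b^2 * Pmax^2 \<ge> 1 + a * Pmax"
    using threshold_squared assms by simp
  show "{(0, 0), (0, ?L), (?L, 0)} \<subseteq> rate_region a b a b Pmax"
    using tdm_corners_in_rate_region assms by simp
  have "rate_region a b a b Pmax \<subseteq> {(r1, r2). r1 \<ge> 0 \<and> r2 \<ge> 0 \<and> r1 + r2 \<le> ?L}"
  proof (clarsimp simp: rate_region_def)
    fix r1 r2 P1 P2 assume r: "r1 \<le> R1 a b P1 P2" "r2 \<le> R2 a b P1 P2"
      and "0 \<le> P1" "P1 \<le> Pmax" "0 \<le> P2" "P2 \<le> Pmax"
    hence "R1 a b P1 P2 + R2 a b P1 P2 \<le> ?L"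
      using sum_rate_le_single_user_rate[OF _ _ _ threshold] assms by simp
    with r show "r1 + r2 \<le> ?L" by linarith
  qed
  also have "\<dots> \<subseteq> convex hull {(0, 0), (0, ?L), (?L, 0)}"
    using assms by (intro triangle_subset_convex_hull) (simp add: zero_less_log_cancel_iff add_pos_pos)
  finally show "rate_region a b a b Pmax \<subseteq> convex hull {(0, 0), (0, ?L), (?L, 0)}" .
qed

end
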